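(* Let $n\ge2$ and let $F$ be a field. For $\lambda\in F^\times$ let $m_{\lambda,n}$ be the diagonal $n\times n$ matrix with first diagonal entry $\lambda^{-(n-1)}$ and remaining diagonal entries $\lambda$, and let $E=\{m_{\lambda,n}:\lambda\in F^\times\}\le\mathrm{SL}_n(F)$. Let $X$ be the set of matrices $a\in\mathrm{GL}_n(F)$ such that $\dim\ker(a-\lambda1_n)\le\dim\ker(a-1_n)+2$ for all $\lambda\in F^\times$. Then $\mathrm{GL}_n(F)=EX=\{ex: e\in E,\ x\in X\}$. *)

theory Defs
  imports "Jordan_Normal_Form.Matrix_Kernel"
begin

definition GL_set :: "nat \<Rightarrow> 'a :: field mat set" where
  "GL_set n = {a. a \<in> carrier_mat n n \<and> invertible_mat a}"

definition m_mat :: "'a :: field \<Rightarrow> nat \<Rightarrow> 'a mat" where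
  "m_mat l n = mat_diag n (\<lambda>i. if i = 0 then inverse l ^ (n - 1) else l)"

definition E_set :: "nat \<Rightarrow> 'a :: field mat set" where
  "E_set n = {m_mat l n | l. l \<noteq> 0}"

definition X_set :: "nat \<Rightarrow> 'a :: field mat set" where
  "X_set n = {a \<in> GL_set n. \<forall>l. l \<noteq> 0 \<longrightarrow>
      kernel_dim (a - l \<cdot>\<^sub>m 1\<^sub>m n) \<le> kernel_dim (a - 1\<^sub>m n) + 2}"

end

theory Submission
  imports Defs "Jordan_Normal_Form.DL_Rank"
begin

text \<open>Choose \<open>l \<noteq> 0\<close> for which the eigenspace \<open>ker (a - l)\<close> of \<open>a\<close> is as large as possible and
  put \<open>x = m\<^sub>l\<^sup>-\<^sup>1 a\<close>, so that \<open>ker (x - \<mu>) = ker (a - \<mu> m\<^sub>l)\<close>.  On the hyperplane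
  \<open>v\<^sub>0 = 0\<close> the matrix \<open>m\<^sub>l\<close> acts as the scalar \<open>l\<close>, so \<open>a - \<mu> m\<^sub>l\<close> agrees there with
  \<open>a - \<mu> l\<close>, and matrices agreeing on a hyperplane have kernel dimensions differing by at most
  one.  Hence \<open>dim ker (x - \<mu>) \<le> dim ker (a - \<mu> l) + 1 \<le> dim ker (a - l) + 1 \<le> dim ker (x - 1) + 2\<close>.
  Conversely \<open>E \<subseteq> SL\<^sub>n\<close>, so \<open>EX \<subseteq> GL\<^sub>n\<close>.\<close>

lemma invertible_mat_iff_det_ne_0:
  fixes A :: "'a :: field mat"
  assumes A: "A \<in> carrier_mat n n"
  shows "invertible_mat A \<longleftrightarrow> det A \<noteq> 0"
proof
  assume "invertible_mat A"
  then obtain B where BA: "B * A = 1\<^sub>m (dim_row B)" and AB: "A * B = 1\<^sub>m n"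
    using A unfolding invertible_mat_def inverts_mat_def by auto
  have B: "B \<in> carrier_mat n n"
    using arg_cong[OF AB, of dim_col] arg_cong[OF BA, of dim_col] A by auto
  show "det A \<noteq> 0"
    using arg_cong[OF AB, of det] det_mult[OF A B] by auto
next
  assume "det A \<noteq> 0"
  then obtain B where "B \<in> carrier_mat n n" "A * B = 1\<^sub>m n" "B * A = 1\<^sub>m n"
    using det_non_zero_imp_unit[OF A] unfolding Units_def ring_mat_def by auto
  then show "invertible_mat A"
    using A unfolding invertible_mat_def inverts_mat_def by auto
qed

lemma det_mat_diag: "det (mat_diag n f) = (\<Prod>i = 0..<n. f i)"
  by (subst det_upper_triangular[of _ n]) (auto simp: mat_diag_def prod_list_diag_prod)

lemma mat_diag_mult_vec:
  assumes "v \<in> carrier_vec n"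
  shows "mat_diag n f *\<^sub>v v = vec n (\<lambda>i. f i * v $ i)"
proof (rule eq_vecI)
  fix i assume "i < dim_vec (vec n (\<lambda>i. f i * v $ i))"
  then show "(mat_diag n f *\<^sub>v v) $ i = vec n (\<lambda>i. f i * v $ i) $ i"
    using assms by (auto simp: mat_diag_def scalar_prod_def sum.remove[of _ i])
qed (auto simp: mat_diag_def)

lemma m_mat_carrier [simp]: "m_mat l n \<in> carrier_mat n n"
  by (simp add: m_mat_def)

lemma det_m_mat:
  assumes "l \<noteq> 0"
  shows "det (m_mat l n) = 1"
proof (cases n)
  case (Suc m)
  have "(\<Prod>i = Suc 0..<Suc m. if i = 0 then inverse l ^ m else l) = l ^ m"
    by (subst prod.cong[OF refl, of _ _ "\<lambda>_. l"]) auto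
  then have "det (m_mat l n) = inverse l ^ m * l ^ m"
    unfolding m_mat_def det_mat_diag Suc prod.atLeast_Suc_lessThan[OF zero_less_Suc] by simp
  then show ?thesis using assms by (simp add: power_inverse)
qed (simp add: m_mat_def det_mat_diag)

lemma m_mat_mult_vec:
  assumes "v \<in> carrier_vec n" "v $ 0 = 0"
  shows "m_mat l n *\<^sub>v v = l \<cdot>\<^sub>v v"
  using assms unfolding m_mat_def by (auto simp: mat_diag_mult_vec)

lemma m_mat_inverse_mult_m_mat: "l \<noteq> 0 \<Longrightarrow> m_mat (inverse l) n * m_mat l n = 1\<^sub>m n"
  unfolding m_mat_def mat_diag_diag
  by (subst mat_diag_one[symmetric], rule arg_cong[where f = "mat_diag n"]) (auto simp: power_inverse)

lemma smult_mat_mult_vec: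
  assumes "A \<in> carrier_mat nr nc" "v \<in> carrier_vec nc"
  shows "(k \<cdot>\<^sub>m A) *\<^sub>v v = k \<cdot>\<^sub>v (A *\<^sub>v v)"
  using assms by (auto simp: scalar_prod_def sum_distrib_left ac_simps intro!: eq_vecI)

lemma (in vectorspace) fin_dim_submodule:
  assumes fd: fin_dim and W: "submodule K W V"
  shows "vectorspace.fin_dim K (vs W)"
proof -
  interpret W: vectorspace K "vs W"
    using W by (intro subspace_is_vs) (auto simp: subspace_def vectorspace_axioms)
  have lin_dep_eq: "W.lin_dep S = lin_dep S" if "S \<subseteq> W" for S
    using span_li_not_depend(2)[OF that W] .
  let ?P = "\<lambda>S. S \<subseteq> carrier (vs W) \<and> W.lin_indpt S"
  have bound: "finite S \<and> card S \<le> dim" if "?P S" for S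
    using li_le_dim[OF fd, of S] that lin_dep_eq W by (auto simp: submodule_def)
  have "?P {}" using lin_dep_eq[of "{}"] by (auto simp: lin_dep_def)
  then obtain B where "finite B" "maximal B ?P"
    using maximal_exists[of ?P, OF bound] by blast
  then show ?thesis
    using W.max_li_is_basis unfolding W.fin_dim_def W.basis_def by blast
qed

lemma (in vectorspace) dim_submodule_le:
  assumes "fin_dim" "submodule K W V"
  shows "vectorspace.dim K (vs W) \<le> dim"
  using subspace_dim fin_dim_submodule assms vectorspace_axioms by (auto simp: subspace_def)

lemma kernel_dim_le_Suc_kernel_dim:
  fixes A B :: "'a::field mat"
  assumes A: "A \<in> carrier_mat nr nc" and B: "B \<in> carrier_mat nr' nc" and i: "i < nc"
    and sub: "\<And>v. v \<in> mat_kernel A \<Longrightarrow> v $ i = 0 \<Longrightarrow> v \<in> mat_kernel B"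
  shows "kernel_dim A \<le> Suc (kernel_dim B)"
proof -
  interpret KA: kernel nr nc A by unfold_locales (rule A)
  interpret KB: kernel nr' nc B by unfold_locales (rule B)
  interpret F1: vec_space "TYPE('a)" 1 .
  define T where "T = (\<lambda>v::'a vec. vec 1 (\<lambda>_. v $ i))"
  interpret T: linear_map class_ring KA.VK F1.V T
    by (intro linear_map.intro mod_hom.intro mod_hom_axioms.intro
        KA.Ker.vectorspace_axioms F1.vectorspace_axioms KA.Ker.module_axioms F1.module_axioms)
      (use A i in \<open>auto simp: LinearCombinations.module_hom_def T_def mat_kernel_def
        module_vec_simps class_ring_simps Pi_def intro!: eq_vecI\<close>)
  have fin_A: "KA.Ker.fin_dim" and fin_B: "KB.Ker.fin_dim"
    using kernel_basis_exists[OF A] kernel_basis_exists[OF B]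
    unfolding KA.Ker.fin_dim_def KA.Ker.basis_def KB.Ker.fin_dim_def KB.Ker.basis_def by auto
  have "vectorspace.dim class_ring (F1.vs T.imT) \<le> F1.dim"
    by (rule F1.dim_submodule_le[OF F1.fin_dim T.im_is_submodule])
  then have rank: "vectorspace.dim class_ring (F1.vs T.imT) \<le> 1"
    using F1.dim_is_n by simp
  have "T.kerT \<subseteq> mat_kernel B"
  proof
    fix v assume "v \<in> T.kerT"
    then have "v \<in> mat_kernel A" and "T v = 0\<^sub>v 1"
      unfolding T.ker_def by (auto simp: module_vec_simps)
    moreover from \<open>T v = 0\<^sub>v 1\<close> have "v $ i = 0"
      unfolding T_def by (simp add: vec_eq_iff)
    ultimately show "v \<in> mat_kernel B" using sub by blast
  qed
  then have "submodule class_ring T.kerT KB.VK"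
    using T.ker_is_submodule KB.Ker.module_axioms unfolding submodule_def by auto
  then have nullity: "vectorspace.dim class_ring (KA.Ker.vs T.kerT) \<le> KB.dim"
    using KB.Ker.dim_submodule_le[OF fin_B] by simp
  show ?thesis
    using T.rank_nullity[OF fin_A] rank nullity by simp
qed

lemma kernel_dim_le_Suc_if_agree_on_hyperplane:
  fixes A B :: "'a::field mat"
  assumes A: "A \<in> carrier_mat nr nc" and B: "B \<in> carrier_mat nr nc" and i: "i < nc"
    and agree: "\<And>v. v \<in> carrier_vec nc \<Longrightarrow> v $ i = 0 \<Longrightarrow> A *\<^sub>v v = B *\<^sub>v v"
  shows "kernel_dim A \<le> Suc (kernel_dim B)"
  by (rule kernel_dim_le_Suc_kernel_dim[OF A B i]) (use A B agree in \<open>auto simp: mat_kernel_def\<close>)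

lemma kernel_dim_le_dim_col: "kernel_dim A \<le> dim_col A"
  unfolding kernel_dim_code by simp

lemma kernel_dim_mult_left:
  fixes M :: "'a::field mat"
  assumes "M \<in> carrier_mat nr nc" "P \<in> carrier_mat nr nr" "Q \<in> carrier_mat nr nr" "Q * P = 1\<^sub>m nr"
  shows "kernel_dim (P * M) = kernel_dim M"
  unfolding kernel_dim_def using mat_kernel_mult_eq[OF assms] assms by simp

lemma kernel_dim_minus_smult_m_mat:
  fixes a :: "'a::field mat"
  assumes a: "a \<in> carrier_mat n n" and n: "0 < n"
  shows "kernel_dim (a - c \<cdot>\<^sub>m m_mat l n) \<le> Suc (kernel_dim (a - (c * l) \<cdot>\<^sub>m 1\<^sub>m n))"
    and "kernel_dim (a - (c * l) \<cdot>\<^sub>m 1\<^sub>m n) \<le> Suc (kernel_dim (a - c \<cdot>\<^sub>m m_mat l n))"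
proof -
  have A: "a - c \<cdot>\<^sub>m m_mat l n \<in> carrier_mat n n" and B: "a - (c * l) \<cdot>\<^sub>m 1\<^sub>m n \<in> carrier_mat n n"
    by (simp_all add: minus_carrier_mat)
  have "(a - c \<cdot>\<^sub>m m_mat l n) *\<^sub>v v = (a - (c * l) \<cdot>\<^sub>m 1\<^sub>m n) *\<^sub>v v"
    if "v \<in> carrier_vec n" "v $ 0 = 0" for v
    using a that by (simp add: minus_mult_distrib_mat_vec smult_mat_mult_vec[of _ n n]
        m_mat_mult_vec smult_smult_assoc)
  then show "kernel_dim (a - c \<cdot>\<^sub>m m_mat l n) \<le> Suc (kernel_dim (a - (c * l) \<cdot>\<^sub>m 1\<^sub>m n))"
    and "kernel_dim (a - (c * l) \<cdot>\<^sub>m 1\<^sub>m n) \<le> Suc (kernel_dim (a - c \<cdot>\<^sub>m m_mat l n))"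
    using kernel_dim_le_Suc_if_agree_on_hyperplane[OF A B n]
      kernel_dim_le_Suc_if_agree_on_hyperplane[OF B A n] by auto
qed

lemma m_mat_mult_mem_GL_set:
  assumes "l \<noteq> 0" "x \<in> GL_set n"
  shows "m_mat l n * x \<in> GL_set n"
proof -
  from assms(2) have x: "x \<in> carrier_mat n n" and "det x \<noteq> 0"
    by (auto simp: GL_set_def invertible_mat_iff_det_ne_0)
  moreover have "m_mat l n * x \<in> carrier_mat n n"
    by (rule mult_carrier_mat[OF m_mat_carrier x])
  ultimately show ?thesis
    using assms(1) by (simp add: GL_set_def invertible_mat_iff_det_ne_0[of _ n] det_mult[of _ n] det_m_mat)
qed

lemma m_mat_inverse_mult_mem_X_set:
  fixes a :: "'a::field mat"
  assumes a: "a \<in> GL_set n" and n: "0 < n" and l: "l \<noteq> 0"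
    and max: "\<And>\<mu>. \<mu> \<noteq> 0 \<Longrightarrow> kernel_dim (a - \<mu> \<cdot>\<^sub>m 1\<^sub>m n) \<le> kernel_dim (a - l \<cdot>\<^sub>m 1\<^sub>m n)"
  shows "m_mat (inverse l) n * a \<in> X_set n"
proof -
  define e where "e = m_mat l n"
  define e' where "e' = m_mat (inverse l) n"
  define x where "x = e' * a"
  have aC: "a \<in> carrier_mat n n" and "det a \<noteq> 0"
    using a by (auto simp: GL_set_def invertible_mat_iff_det_ne_0)
  have eC: "e \<in> carrier_mat n n" and e'C: "e' \<in> carrier_mat n n"
    by (simp_all add: e_def e'_def)
  then have xC: "x \<in> carrier_mat n n"
    using aC by (simp add: x_def mult_carrier_mat[OF e'C aC])
  have "det x \<noteq> 0"
    using det_mult[OF e'C aC] det_m_mat[of "inverse l" n] l \<open>det a \<noteq> 0\<close> by (simp add: x_def e'_def)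
  have e'e: "e' * e = 1\<^sub>m n" and ee': "e * e' = 1\<^sub>m n"
    using m_mat_inverse_mult_m_mat[of l n] m_mat_inverse_mult_m_mat[of "inverse l" n] l
    by (simp_all add: e_def e'_def)
  have kernel_x: "kernel_dim (x - \<mu> \<cdot>\<^sub>m 1\<^sub>m n) = kernel_dim (a - \<mu> \<cdot>\<^sub>m e)" for \<mu>
  proof -
    have "x - \<mu> \<cdot>\<^sub>m 1\<^sub>m n = e' * (a - \<mu> \<cdot>\<^sub>m e)"
      using aC eC e'C by (simp add: x_def mult_minus_distrib_mat mult_smult_distrib e'e)
    moreover have "a - \<mu> \<cdot>\<^sub>m e \<in> carrier_mat n n"
      using eC by (intro minus_carrier_mat smult_carrier_mat)
    ultimately show ?thesis
      using kernel_dim_mult_left[OF _ e'C eC ee'] by simp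
  qed
  have upper: "kernel_dim (a - \<mu> \<cdot>\<^sub>m e) \<le> Suc (kernel_dim (a - (\<mu> * l) \<cdot>\<^sub>m 1\<^sub>m n))" for \<mu>
    unfolding e_def by (rule kernel_dim_minus_smult_m_mat(1)[OF aC n])
  have lower: "kernel_dim (a - l \<cdot>\<^sub>m 1\<^sub>m n) \<le> Suc (kernel_dim (a - 1 \<cdot>\<^sub>m e))"
    using kernel_dim_minus_smult_m_mat(2)[OF aC n, of 1 l] unfolding e_def by simp
  have "kernel_dim (x - \<mu> \<cdot>\<^sub>m 1\<^sub>m n) \<le> kernel_dim (x - 1\<^sub>m n) + 2" if "\<mu> \<noteq> 0" for \<mu>
  proof -
    have "kernel_dim (x - \<mu> \<cdot>\<^sub>m 1\<^sub>m n) \<le> Suc (kernel_dim (a - (\<mu> * l) \<cdot>\<^sub>m 1\<^sub>m n))"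
      using kernel_x upper by simp
    also have "\<dots> \<le> Suc (kernel_dim (a - l \<cdot>\<^sub>m 1\<^sub>m n))"
      using max[of "\<mu> * l"] that l by simp
    also have "\<dots> \<le> kernel_dim (x - 1 \<cdot>\<^sub>m 1\<^sub>m n) + 2"
      using lower kernel_x[of 1] by simp
    also have "(1::'a) \<cdot>\<^sub>m 1\<^sub>m n = 1\<^sub>m n"
      by (rule eq_matI) auto
    finally show ?thesis .
  qed
  then show ?thesis
    using xC \<open>det x \<noteq> 0\<close> by (simp add: x_def e'_def X_set_def GL_set_def invertible_mat_iff_det_ne_0)
qed

theorem lemma3p1:
  fixes n :: nat
  assumes "n \<ge> 2"
  shows "(GL_set n :: 'a :: field mat set) = {e * x | e x. e \<in> E_set n \<and> x \<in> X_set n}"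
proof (intro equalityI subsetI)
  fix a :: "'a mat" assume a: "a \<in> GL_set n"
  then have aC: "a \<in> carrier_mat n n" by (simp add: GL_set_def)
  have "kernel_dim (a - \<mu> \<cdot>\<^sub>m 1\<^sub>m n) < Suc n" for \<mu>
    using kernel_dim_le_dim_col[of "a - \<mu> \<cdot>\<^sub>m 1\<^sub>m n"] aC by simp
  then obtain l where l: "l \<noteq> 0"
    and max: "\<And>\<mu>. \<mu> \<noteq> 0 \<Longrightarrow> kernel_dim (a - \<mu> \<cdot>\<^sub>m 1\<^sub>m n) \<le> kernel_dim (a - l \<cdot>\<^sub>m 1\<^sub>m n)"
    using ex_has_greatest_nat[of "\<lambda>l. l \<noteq> 0" 1 "\<lambda>l. kernel_dim (a - l \<cdot>\<^sub>m 1\<^sub>m n)" "Suc n"] by auto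
  have "a = m_mat l n * (m_mat (inverse l) n * a)"
    using aC m_mat_inverse_mult_m_mat[of "inverse l" n] l
    by (simp add: assoc_mult_mat[of _ n n _ n _ n, symmetric])
  moreover have "m_mat l n \<in> E_set n" using l by (auto simp: E_set_def)
  moreover have "m_mat (inverse l) n * a \<in> X_set n"
    using m_mat_inverse_mult_mem_X_set[OF a _ l max] assms by simp
  ultimately show "a \<in> {e * x | e x. e \<in> E_set n \<and> x \<in> X_set n}" by blast
next
  fix a :: "'a mat" assume "a \<in> {e * x | e x. e \<in> E_set n \<and> x \<in> X_set n}"
  then show "a \<in> GL_set n"
    by (auto simp: E_set_def X_set_def intro: m_mat_mult_mem_GL_set)
qed

end
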